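(* Let $a\in\mathbb N$, let $\mathfrak o$ be a compact discrete valuation ring with maximal ideal $\mathfrak p$ and residue field cardinality $q$, and $t=q^{-s}$. Let $V_{2,a}(\mathfrak o)$ be the $\mathfrak o$-representation of the star quiver $\mathsf S_a$ in which every vertex is represented by $\mathfrak o^2$ and every arrow by the identity map. Then $$\zeta_{V_{2,a}(\mathfrak o)}(s)=\sum_{r_0=0}^\infty t^{2r_0}\left(\left(\zeta_{(r_0,r_0),\mathfrak o}(s)\right)^{a-1}+(1+q^{-1})\sum_{r_1=1}^\infty(qt)^{r_1}\left(\zeta_{(r_0+r_1,r_0),\mathfrak o}(s)\right)^{a-1}\right).$$
   Context: The star quiver $\mathsf S_a$ has vertices $v_1,\dots,v_a$ and arrows $v_1\to v_j$ for $j=2,\dots,a$. Subrepresentations of a representation $(\mathcal L_\iota,f_\phi)$ are tuples of submodules $\Lambda_\iota\le\mathcal L_\iota$ with $f_\phi(\Lambda_{\mathrm{tail}(\phi)})\subseteq\Lambda_{\mathrm{head}(\phi)}$; $\zeta_V(s)=\sum_{V'}\prod_\iota|\mathcal L_\iota:\Lambda_\iota|^{-s}$ over finite-index subrepresentations. For a partition $\lambda=(\lambda_1,\lambda_2)$, $\zeta_{\lambda,\mathfrak o}(s)=\sum_U|M:U|^{-s}$ is the Dirichlet polynomial enumerating all $\mathfrak o$-submodules $U$ of the finite module $M=\mathfrak o/\mathfrak p^{\lambda_1}\times\mathfrak o/\mathfrak p^{\lambda_2}$. *)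

theory Defs
  imports "HOL-Analysis.Analysis"
begin

text \<open>The ring o is modelled as an integral domain type 'a (the whole type is o).
  We fix a uniformizer \<pi> (so the maximal ideal is p = \<pi> o).  o is a DVR iff
  \<pi> is a nonzero non-unit and every nonzero element is a unit times a power of \<pi>.
  o is compact iff the residue field o/p is finite and o is \<pi>-adically complete.\<close>

definition residue_classes :: "'a::idom \<Rightarrow> 'a set set" where
  "residue_classes \<pi> = range (\<lambda>x. {x + \<pi> * y | y. True})"

definition compact_dvr :: "'a::idom \<Rightarrow> nat \<Rightarrow> bool" where
  "compact_dvr \<pi> q \<longleftrightarrow>
     \<pi> \<noteq> 0 \<and> \<not> \<pi> dvd 1 \<and>
     (\<forall>x. x \<noteq> 0 \<longrightarrow> (\<exists>u n. u dvd 1 \<and> x = u * \<pi> ^ n)) \<and>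
     finite (residue_classes \<pi>) \<and> card (residue_classes \<pi>) = q \<and>
     (\<forall>x :: nat \<Rightarrow> 'a. (\<forall>n. \<pi> ^ n dvd (x (Suc n) - x n)) \<longrightarrow>
        (\<exists>y. \<forall>n. \<pi> ^ n dvd (y - x n)))"

definition smult2 :: "'a::comm_ring_1 \<Rightarrow> 'a \<times> 'a \<Rightarrow> 'a \<times> 'a" where
  "smult2 r v = (r * fst v, r * snd v)"

definition is_submodule2 :: "('a::comm_ring_1 \<times> 'a) set \<Rightarrow> bool" where
  "is_submodule2 L \<longleftrightarrow> 0 \<in> L \<and> (\<forall>x\<in>L. \<forall>y\<in>L. x + y \<in> L) \<and>
     (\<forall>r. \<forall>x\<in>L. smult2 r x \<in> L)"

definition coset2 :: "('a::comm_ring_1 \<times> 'a) set \<Rightarrow> 'a \<times> 'a \<Rightarrow> ('a \<times> 'a) set" where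
  "coset2 N x = (\<lambda>n. x + n) ` N"

definition quot2 :: "('a::comm_ring_1 \<times> 'a) set \<Rightarrow> ('a \<times> 'a) set set" where
  "quot2 N = range (coset2 N)"

text \<open>Index |o^2 : L| of a submodule L (meaningful when the quotient is finite).\<close>
definition index2 :: "('a::comm_ring_1 \<times> 'a) set \<Rightarrow> nat" where
  "index2 L = card (quot2 L)"

definition finite_index2 :: "('a::comm_ring_1 \<times> 'a) set \<Rightarrow> bool" where
  "finite_index2 L \<longleftrightarrow> finite (quot2 L)"

text \<open>Vertices 1..a, arrows (tail, head) = (1, j) for j = 2..a.\<close>
definition star_arrows :: "nat \<Rightarrow> (nat \<times> nat) set" where
  "star_arrows a = {(1, j) | j. 2 \<le> j \<and> j \<le> a}"

text \<open>A subrepresentation is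
  a tuple (Lambda_1, ..., Lambda_a) of submodules of o^2 with
  f_phi(Lambda_tail) contained in Lambda_head; tuples are functions on nat that are
  UNIV outside 1..a.\<close>
definition V2a_map :: "nat \<times> nat \<Rightarrow> 'a::comm_ring_1 \<times> 'a \<Rightarrow> 'a \<times> 'a" where
  "V2a_map phi = id"

definition finite_index_subreps_V2a :: "nat \<Rightarrow> (nat \<Rightarrow> ('a::comm_ring_1 \<times> 'a) set) set" where
  "finite_index_subreps_V2a a =
     {Lam. (\<forall>i. i \<notin> {1..a} \<longrightarrow> Lam i = UNIV) \<and>
           (\<forall>i\<in>{1..a}. is_submodule2 (Lam i) \<and> finite_index2 (Lam i)) \<and>
           (\<forall>(i, j)\<in>star_arrows a. V2a_map (i, j) ` Lam i \<subseteq> Lam j)}"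

definition zeta_V2a :: "'a::comm_ring_1 itself \<Rightarrow> nat \<Rightarrow> real \<Rightarrow> ennreal" where
  "zeta_V2a _ a s =
     infsum (\<lambda>Lam. ennreal (\<Prod>i\<in>{1..a}. real (index2 (Lam i)) powr (- s)))
            (finite_index_subreps_V2a a :: (nat \<Rightarrow> ('a \<times> 'a) set) set)"

text \<open>The kernel N = p^l1 x p^l2 of o^2 -> M; M is modelled as quot2 N.\<close>
definition lat2 :: "'a::comm_ring_1 \<Rightarrow> nat \<Rightarrow> nat \<Rightarrow> ('a \<times> 'a) set" where
  "lat2 \<pi> l1 l2 = {(\<pi> ^ l1 * x, \<pi> ^ l2 * y) | x y. True}"

definition quot_submodules :: "('a::comm_ring_1 \<times> 'a) set \<Rightarrow> ('a \<times> 'a) set set set" where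
  "quot_submodules N =
     {U. U \<subseteq> quot2 N \<and> coset2 N 0 \<in> U \<and>
         (\<forall>x y. coset2 N x \<in> U \<longrightarrow> coset2 N y \<in> U \<longrightarrow> coset2 N (x + y) \<in> U) \<and>
         (\<forall>r x. coset2 N x \<in> U \<longrightarrow> coset2 N (smult2 r x) \<in> U)}"

text \<open>|M : U| = |M| / |U| (M finite).\<close>
definition zeta_lambda :: "'a::comm_ring_1 \<Rightarrow> nat \<Rightarrow> nat \<Rightarrow> real \<Rightarrow> real" where
  "zeta_lambda \<pi> l1 l2 s =
     (\<Sum>U\<in>quot_submodules (lat2 \<pi> l1 l2).
        (real (card (quot2 (lat2 \<pi> l1 l2))) / real (card U)) powr (- s))"

end

theory Submission
  imports Defs
begin

text \<open>A subrepresentation of \<open>V\<^sub>2\<^sub>,\<^sub>a(o)\<close> is a finite-index lattice \<open>\<Lambda>\<^sub>1 \<subseteq> o\<^sup>2\<close> together with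
  \<open>a - 1\<close> lattices containing it, so the zeta function is the sum over \<open>\<Lambda>\<^sub>1\<close> of
  \<open>|o\<^sup>2 : \<Lambda>\<^sub>1|\<^sup>-\<^sup>s Z(\<Lambda>\<^sub>1)\<^sup>a\<^sup>-\<^sup>1\<close>, where \<open>Z(\<Lambda>)\<close> sums \<open>|o\<^sup>2 : \<Lambda>'|\<^sup>-\<^sup>s\<close> over the lattices
  \<open>\<Lambda>' \<supseteq> \<Lambda>\<close>, i.e. over the submodules of \<open>o\<^sup>2 / \<Lambda>\<close>, with the same indices.
  Every finite-index lattice is, uniquely, \<open>\<pi>\<^sup>r\<^sup>0 (o P + \<pi>\<^sup>r\<^sup>1 o\<^sup>2)\<close> for a point \<open>P\<close> of the
  projective line over \<open>o / \<pi>\<^sup>r\<^sup>1\<close>: divide out the largest power of \<open>\<pi>\<close> and normalise a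
  vector with a unit coordinate. An automorphism of \<open>o\<^sup>2\<close> carries \<open>\<pi>\<^sup>r\<^sup>0\<^sup>+\<^sup>r\<^sup>1 o \<times> \<pi>\<^sup>r\<^sup>0 o\<close> onto
  this lattice, so its index is \<open>q\<^sup>2\<^sup>r\<^sup>0\<^sup>+\<^sup>r\<^sup>1\<close> and \<open>Z = \<zeta>\<^bsub>(r\<^sub>0+r\<^sub>1, r\<^sub>0)\<^esub>\<close>. There are
  \<open>q\<^sup>r\<^sup>1 + q\<^sup>r\<^sup>1\<^sup>-\<^sup>1 = (1 + q\<^sup>-\<^sup>1) q\<^sup>r\<^sup>1\<close> such points for \<open>r\<^sub>1 \<ge> 1\<close> and one for \<open>r\<^sub>1 = 0\<close>, and regrouping
  the series of nonnegative terms by \<open>(r\<^sub>0, r\<^sub>1)\<close> gives the formula.\<close>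

section \<open>Regularity of ordered spaces; sums in \<^typ>\<open>ennreal\<close>\<close>

lemma (in linorder_topology) open_separates_from_below:
  assumes "open U" "y \<in> U"
  shows "\<exists>A B. open A \<and> open B \<and> y \<in> A \<and> {x. x < y \<and> x \<notin> U} \<subseteq> B \<and> A \<inter> B = {}"
proof (cases "\<exists>z. z < y")
  case True
  then obtain b where b: "b < y" "{b<..y} \<subseteq> U" using open_left[OF assms] by blast
  then have below: "x \<le> b" if "x < y" "x \<notin> U" for x
    using that by (meson greaterThanAtMost_iff less_imp_le not_le subsetD)
  show ?thesis
  proof (cases "\<exists>c. b < c \<and> c < y")
    case True
    then obtain c where "b < c" "c < y" by blast
    then show ?thesis
      by (intro exI[of _ "{c<..}"] exI[of _ "{..<c}"]) (auto dest: below)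
  next
    case False
    then show ?thesis using b
      by (intro exI[of _ "{b<..}"] exI[of _ "{..<y}"]) auto
  qed
qed auto

lemma (in linorder_topology) open_separates_from_above:
  assumes "open U" "y \<in> U"
  shows "\<exists>A B. open A \<and> open B \<and> y \<in> A \<and> {x. y < x \<and> x \<notin> U} \<subseteq> B \<and> A \<inter> B = {}"
proof (cases "\<exists>z. y < z")
  case True
  then obtain b where b: "y < b" "{y..<b} \<subseteq> U" using open_right[OF assms] by blast
  then have above: "b \<le> x" if "y < x" "x \<notin> U" for x
    using that by (meson atLeastLessThan_iff less_imp_le not_le subsetD)
  show ?thesis
  proof (cases "\<exists>c. y < c \<and> c < b")
    case True
    then obtain c where "y < c" "c < b" by blast
    then show ?thesis
      by (intro exI[of _ "{..<c}"] exI[of _ "{c<..}"]) (auto dest: above)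
  next
    case False
    then show ?thesis using b
      by (intro exI[of _ "{..<b}"] exI[of _ "{y<..}"]) auto
  qed
qed auto

text \<open>This makes Fubini's theorem \<open>has_sum_SigmaD\<close> available for sums in \<^typ>\<open>ennreal\<close>.\<close>

instance linorder_topology \<subseteq> t3_space
proof
  fix S :: "'a set" and y :: 'a
  assume "closed S" "y \<notin> S"
  then have "open (- S)" "y \<in> - S" by auto
  obtain A1 B1 where 1: "open A1" "open B1" "y \<in> A1" "{x. x < y \<and> x \<in> S} \<subseteq> B1" "A1 \<inter> B1 = {}"
    using open_separates_from_below[OF \<open>open (- S)\<close> \<open>y \<in> - S\<close>] by auto
  obtain A2 B2 where 2: "open A2" "open B2" "y \<in> A2" "{x. y < x \<and> x \<in> S} \<subseteq> B2" "A2 \<inter> B2 = {}"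
    using open_separates_from_above[OF \<open>open (- S)\<close> \<open>y \<in> - S\<close>] by auto
  have "S \<subseteq> B1 \<union> B2"
  proof
    fix x assume "x \<in> S"
    then have "x < y \<or> y < x" using \<open>y \<notin> S\<close> by (metis neqE)
    then show "x \<in> B1 \<union> B2" using 1(4) 2(4) \<open>x \<in> S\<close> by auto
  qed
  then show "\<exists>U V. open U \<and> open V \<and> y \<in> U \<and> S \<subseteq> V \<and> U \<inter> V = {}"
    using 1 2 by (intro exI[of _ "A1 \<inter> A2"] exI[of _ "B1 \<union> B2"]) auto
qed

lemma infsum_Sigma_ennreal:
  fixes f :: "'a \<times> 'b \<Rightarrow> ennreal"
  shows "infsum f (Sigma A B) = infsum (\<lambda>x. infsum (\<lambda>y. f (x, y)) (B x)) A"
  by (rule infsumI[symmetric], rule has_sum_SigmaD[where f = f and B = B])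
    (auto intro!: has_sum_infsum nonneg_summable_on_complete)

lemma infsum_cmult_right_ennreal:
  fixes f :: "'a \<Rightarrow> ennreal"
  shows "infsum (\<lambda>x. c * f x) A = c * infsum f A"
  by (simp add: nonneg_infsum_complete sum_distrib_left[symmetric] SUP_mult_left_ennreal)

lemma power_powr: "0 \<le> x \<Longrightarrow> (x ^ n) powr s = (x powr s) ^ n" for x :: real
  by (induction n) (simp_all add: powr_mult)

lemma smult2_Pair [simp]: "smult2 r (x, y) = (r * x, r * y)"
  by (simp add: smult2_def)

lemma submodule2_zero: "is_submodule2 L \<Longrightarrow> 0 \<in> L"
  by (simp add: is_submodule2_def)

lemma submodule2_add: "is_submodule2 L \<Longrightarrow> x \<in> L \<Longrightarrow> y \<in> L \<Longrightarrow> x + y \<in> L"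
  by (simp add: is_submodule2_def)

lemma submodule2_smult: "is_submodule2 L \<Longrightarrow> x \<in> L \<Longrightarrow> smult2 r x \<in> L"
  by (simp add: is_submodule2_def)

lemma submodule2_diff:
  fixes L :: "('a::comm_ring_1 \<times> 'a) set"
  assumes "is_submodule2 L" "x \<in> L" "y \<in> L"
  shows "x - y \<in> L"
proof -
  have "x + smult2 (- 1) y \<in> L" using assms by (simp add: submodule2_add submodule2_smult)
  moreover have "smult2 (- 1) y = - y" by (cases y) simp
  ultimately show ?thesis by simp
qed

lemma mem_coset2_iff: "z \<in> coset2 L x \<longleftrightarrow> z - x \<in> (L :: ('a::comm_ring_1 \<times> 'a) set)"
  unfolding coset2_def by (auto simp: image_iff) (metis add.commute diff_add_cancel)

lemma coset2_self: "is_submodule2 L \<Longrightarrow> x \<in> coset2 L x"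
  by (simp add: mem_coset2_iff submodule2_zero)

lemma coset2_eq_iff:
  fixes L :: "('a::comm_ring_1 \<times> 'a) set"
  assumes L: "is_submodule2 L"
  shows "coset2 L x = coset2 L y \<longleftrightarrow> x - y \<in> L"
proof
  assume "coset2 L x = coset2 L y"
  then show "x - y \<in> L" using coset2_self[OF L, of x] by (simp add: mem_coset2_iff)
next
  assume xy: "x - y \<in> L"
  have "z - x \<in> L \<longleftrightarrow> z - y \<in> L" for z
    using submodule2_add[OF L _ xy, of "z - x"] submodule2_diff[OF L _ xy, of "z - y"] by auto
  then show "coset2 L x = coset2 L y" by (auto simp: mem_coset2_iff)
qed

lemma coset2_translate: "(+) x ` coset2 L y = coset2 L (x + y)"
  unfolding coset2_def by (auto simp: image_iff add.assoc)

lemma mem_lat2_iff: "v \<in> lat2 p l1 l2 \<longleftrightarrow> p ^ l1 dvd fst v \<and> p ^ l2 dvd (snd v :: 'a::comm_ring_1)"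
  unfolding lat2_def by (cases v) (auto simp: dvd_def)

lemma submodule2_lat2: "is_submodule2 (lat2 (p :: 'a::comm_ring_1) l1 l2)"
  by (auto simp: is_submodule2_def mem_lat2_iff smult2_def)

section \<open>Supermodules and the correspondence theorem\<close>

definition supermodules2 :: "('a::comm_ring_1 \<times> 'a) set \<Rightarrow> ('a \<times> 'a) set set" where
  "supermodules2 N = {L. is_submodule2 L \<and> N \<subseteq> L}"

context
  fixes N L :: "('a::comm_ring_1 \<times> 'a) set"
  assumes N: "is_submodule2 N" and L: "is_submodule2 L" and NL: "N \<subseteq> L"
begin

lemma coset2_supermodule_Union: "(\<Union>c\<in>coset2 N x. coset2 L c) = coset2 L x"
proof -
  have "coset2 L c = coset2 L x" if "c \<in> coset2 N x" for c
    using that NL by (auto simp: mem_coset2_iff coset2_eq_iff[OF L])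
  then show ?thesis using coset2_self[OF N, of x] by blast
qed

lemma finite_quot2_supermodule: "finite (quot2 N) \<Longrightarrow> finite (quot2 L)"
proof -
  have "quot2 L = (\<lambda>C. \<Union>c\<in>C. coset2 L c) ` quot2 N"
    by (simp add: quot2_def image_image coset2_supermodule_Union)
  then show "finite (quot2 N) \<Longrightarrow> finite (quot2 L)" by simp
qed

lemma supermodule_cosets_containing: "{D \<in> quot2 L. coset2 N x \<subseteq> D} = {coset2 L x}"
proof -
  have "D = coset2 L x" if D_quot: "D \<in> quot2 L" and sub: "coset2 N x \<subseteq> D" for D
  proof -
    obtain y where D: "D = coset2 L y" using D_quot unfolding quot2_def by blast
    have "x \<in> D" using sub coset2_self[OF N] by blast
    then show ?thesis unfolding D by (metis mem_coset2_iff coset2_eq_iff[OF L])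
  qed
  moreover have "coset2 N x \<subseteq> coset2 L x" using NL by (auto simp: mem_coset2_iff)
  ultimately show ?thesis unfolding quot2_def by blast
qed

lemma cosets_inside_supermodule_coset:
  "{C \<in> quot2 N. C \<subseteq> coset2 L x} = (\<lambda>C. (+) x ` C) ` (coset2 N ` L)"
proof (intro equalityI subsetI)
  fix C assume "C \<in> {C \<in> quot2 N. C \<subseteq> coset2 L x}"
  then obtain y where C: "C = coset2 N y" and sub: "C \<subseteq> coset2 L x" unfolding quot2_def by auto
  have "y \<in> coset2 L x" using sub coset2_self[OF N, of y] C by blast
  then have "y - x \<in> L" by (simp add: mem_coset2_iff)
  moreover have "C = (+) x ` coset2 N (y - x)" by (simp add: C coset2_translate)
  ultimately show "C \<in> (\<lambda>C. (+) x ` C) ` (coset2 N ` L)" by blast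
next
  fix C assume "C \<in> (\<lambda>C. (+) x ` C) ` (coset2 N ` L)"
  then obtain l where l: "l \<in> L" and C: "C = coset2 N (x + l)" by (auto simp: coset2_translate)
  have "C \<subseteq> coset2 L x"
  proof
    fix z assume "z \<in> C"
    then have "z - (x + l) \<in> L" using C NL by (auto simp: mem_coset2_iff)
    then have "(z - (x + l)) + l \<in> L" using l by (rule submodule2_add[OF L])
    then show "z \<in> coset2 L x" by (simp add: mem_coset2_iff algebra_simps)
  qed
  then show "C \<in> {C \<in> quot2 N. C \<subseteq> coset2 L x}" unfolding quot2_def C by auto
qed

text \<open>Double counting of the incidences \<^prop>\<open>C \<subseteq> D\<close> between cosets of \<^term>\<open>N\<close>
  and of \<^term>\<open>L\<close>.\<close>

lemma card_quot2_supermodule: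
  assumes fin: "finite (quot2 N)"
  shows "card (quot2 N) = card (coset2 N ` L) * card (quot2 L)"
proof -
  have inj: "inj_on (\<lambda>C. (+) x ` C) A" for x :: "'a \<times> 'a" and A
    by (rule inj_onI) (metis add_left_cancel inj_image_eq_iff inj_on_def)
  have "(\<Sum>C\<in>quot2 N. card {D \<in> quot2 L. C \<subseteq> D}) = card (coset2 N ` L) * card (quot2 L)"
  proof (rule sum_multicount[OF fin finite_quot2_supermodule[OF fin]], intro ballI)
    fix D assume "D \<in> quot2 L"
    then obtain x where "D = coset2 L x" unfolding quot2_def by blast
    then show "card {C \<in> quot2 N. C \<subseteq> D} = card (coset2 N ` L)"
      by (simp add: cosets_inside_supermodule_coset card_image[OF inj])
  qed
  moreover have "card {D \<in> quot2 L. C \<subseteq> D} = 1" if "C \<in> quot2 N" for C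
    using that supermodule_cosets_containing unfolding quot2_def by auto
  ultimately show ?thesis by simp
qed

end

lemma Union_cosets_supermodule:
  assumes N: "is_submodule2 N" and L: "L \<in> supermodules2 N"
  shows "\<Union> (coset2 N ` L) = (L :: ('a::comm_ring_1 \<times> 'a) set)"
proof
  show "\<Union> (coset2 N ` L) \<subseteq> L"
  proof
    fix z assume "z \<in> \<Union> (coset2 N ` L)"
    then obtain l where "l \<in> L" "z - l \<in> L" using L by (auto simp: mem_coset2_iff supermodules2_def)
    moreover have "is_submodule2 L" using L by (simp add: supermodules2_def)
    ultimately have "(z - l) + l \<in> L" by (metis submodule2_add)
    then show "z \<in> L" by simp
  qed
qed (use coset2_self[OF N] in auto)

lemma coset2_mem_image_iff:
  assumes N: "is_submodule2 N" and L: "L \<in> supermodules2 N"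
  shows "coset2 N x \<in> coset2 N ` L \<longleftrightarrow> x \<in> (L :: ('a::comm_ring_1 \<times> 'a) set)"
  using coset2_self[OF N, of x] Union_cosets_supermodule[OF N L] by auto

lemma bij_betw_supermodules2_quot_submodules:
  assumes N: "is_submodule2 (N :: ('a::comm_ring_1 \<times> 'a) set)"
  shows "bij_betw (\<lambda>L. coset2 N ` L) (supermodules2 N) (quot_submodules N)"
proof (rule bij_betwI')
  fix L L' assume "L \<in> supermodules2 N" "L' \<in> supermodules2 N"
  then show "(coset2 N ` L = coset2 N ` L') = (L = L')"
    using Union_cosets_supermodule[OF N] by metis
next
  fix L assume L: "L \<in> supermodules2 N"
  then have Ls: "is_submodule2 L" by (simp add: supermodules2_def)
  show "coset2 N ` L \<in> quot_submodules N"
    unfolding quot_submodules_def mem_Collect_eq coset2_mem_image_iff[OF N L]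
    using submodule2_zero[OF Ls] submodule2_add[OF Ls] submodule2_smult[OF Ls]
    by (auto simp: quot2_def)
next
  fix U assume U: "U \<in> quot_submodules N"
  define L where "L = {x. coset2 N x \<in> U}"
  have "is_submodule2 L" using U unfolding L_def quot_submodules_def is_submodule2_def by auto
  moreover have "N \<subseteq> L"
  proof
    fix n assume "n \<in> N"
    then have "coset2 N n = coset2 N 0" using coset2_eq_iff[OF N] by simp
    then show "n \<in> L" using U unfolding L_def quot_submodules_def by simp
  qed
  moreover have "U = coset2 N ` L"
    using U unfolding L_def quot_submodules_def quot2_def by auto
  ultimately show "\<exists>L\<in>supermodules2 N. U = coset2 N ` L" by (auto simp: supermodules2_def)
qed

lemma zeta_lambda_nonneg: "0 \<le> zeta_lambda p l1 l2 s"
  unfolding zeta_lambda_def by (rule sum_nonneg) simp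

definition zeta_supermodules :: "('a::comm_ring_1 \<times> 'a) set \<Rightarrow> real \<Rightarrow> real" where
  "zeta_supermodules N s = (\<Sum>L\<in>supermodules2 N. real (index2 L) powr (- s))"

lemma sum_quot_submodules_eq_zeta_supermodules:
  assumes N: "is_submodule2 N" and fin: "finite (quot2 (N :: ('a::comm_ring_1 \<times> 'a) set))"
  shows "(\<Sum>U\<in>quot_submodules N. (real (card (quot2 N)) / real (card U)) powr (- s))
       = zeta_supermodules N s"
proof -
  have "(real (card (quot2 N)) / real (card (coset2 N ` L))) powr (- s) = real (index2 L) powr (- s)"
    if L: "L \<in> supermodules2 N" for L
  proof -
    have Ls: "is_submodule2 L" and NL: "N \<subseteq> L" using L by (auto simp: supermodules2_def)
    have "finite (coset2 N ` L)"
      using fin by (rule finite_subset[rotated]) (auto simp: quot2_def)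
    then have "card (coset2 N ` L) \<noteq> 0" using submodule2_zero[OF Ls] by auto
    then show ?thesis
      unfolding index2_def card_quot2_supermodule[OF N Ls NL fin] by simp
  qed
  then show ?thesis
    unfolding zeta_supermodules_def
    by (simp add: sum.reindex_bij_betw[OF bij_betw_supermodules2_quot_submodules[OF N], symmetric])
qed

lemma zeta_lambda_eq_zeta_supermodules:
  "finite (quot2 (lat2 (p :: 'a::comm_ring_1) l1 l2))
    \<Longrightarrow> zeta_lambda p l1 l2 s = zeta_supermodules (lat2 p l1 l2) s"
  unfolding zeta_lambda_def by (rule sum_quot_submodules_eq_zeta_supermodules[OF submodule2_lat2])

lemma submodule2_vimage:
  fixes g :: "'a::comm_ring_1 \<times> 'a \<Rightarrow> 'a \<times> 'a"
  assumes add: "\<And>x y. g (x + y) = g x + g y" and smult: "\<And>r x. g (smult2 r x) = smult2 r (g x)"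
    and L: "is_submodule2 L"
  shows "is_submodule2 (g -` L)"
proof -
  have "g 0 = 0" using add[of 0 0] by simp
  then show ?thesis using L unfolding is_submodule2_def by (simp add: add smult)
qed

definition lin_aut2 :: "('a::comm_ring_1 \<times> 'a \<Rightarrow> 'a \<times> 'a) \<Rightarrow> bool" where
  "lin_aut2 g \<longleftrightarrow> bij g \<and> (\<forall>x y. g (x + y) = g x + g y) \<and> (\<forall>r x. g (smult2 r x) = smult2 r (g x))"

context
  fixes g :: "'a::comm_ring_1 \<times> 'a \<Rightarrow> 'a \<times> 'a"
  assumes g: "lin_aut2 g"
begin

lemma lin_aut2_add: "g (x + y) = g x + g y"
  using g unfolding lin_aut2_def by blast

lemma lin_aut2_smult: "g (smult2 r x) = smult2 r (g x)"
  using g unfolding lin_aut2_def by blast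

lemma lin_aut2_inj: "inj g" and lin_aut2_surj: "surj g"
  using g by (simp_all add: lin_aut2_def bij_def)

lemma lin_aut2_zero: "g 0 = 0"
  using lin_aut2_add[of 0 0] by simp

lemma submodule2_image:
  assumes L: "is_submodule2 L"
  shows "is_submodule2 (g ` L)"
  unfolding is_submodule2_def
proof (intro conjI ballI allI)
  show "0 \<in> g ` L" using lin_aut2_zero submodule2_zero[OF L] by (metis image_eqI)
next
  fix x y assume "x \<in> g ` L" "y \<in> g ` L"
  then obtain a b where "a \<in> L" "b \<in> L" "x = g a" "y = g b" by blast
  then show "x + y \<in> g ` L" using lin_aut2_add[of a b] submodule2_add[OF L] by (metis image_eqI)
next
  fix r x assume "x \<in> g ` L"
  then obtain a where "a \<in> L" "x = g a" by blast
  then show "smult2 r x \<in> g ` L" using lin_aut2_smult[of r a] submodule2_smult[OF L] by (metis image_eqI)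
qed

lemma quot2_image: "quot2 (g ` L) = (\<lambda>C. g ` C) ` quot2 L"
proof -
  have "g ` coset2 L x = coset2 (g ` L) (g x)" for x
    unfolding coset2_def image_image by (simp add: lin_aut2_add)
  moreover have "range (coset2 (g ` L)) = range (\<lambda>x. coset2 (g ` L) (g x))"
    using lin_aut2_surj by (metis image_image)
  ultimately show ?thesis unfolding quot2_def by (simp add: image_image)
qed

lemma inj_image_lin_aut2: "inj (\<lambda>C. g ` C)"
  using lin_aut2_inj by (simp add: inj_on_def inj_image_eq_iff)

lemma index2_image: "index2 (g ` L) = index2 L"
  unfolding index2_def quot2_image using inj_image_lin_aut2 by (simp add: card_image inj_on_subset)

lemma finite_quot2_image_iff: "finite (quot2 (g ` L)) \<longleftrightarrow> finite (quot2 L)"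
  unfolding quot2_image using inj_image_lin_aut2 by (simp add: finite_image_iff inj_on_subset)

lemma supermodules2_image: "supermodules2 (g ` N) = (\<lambda>L. g ` L) ` supermodules2 N"
proof (intro equalityI subsetI)
  fix L' assume "L' \<in> supermodules2 (g ` N)"
  then have "g -` L' \<in> supermodules2 N" and "L' = g ` (g -` L')"
    using submodule2_vimage[OF lin_aut2_add lin_aut2_smult] lin_aut2_surj
    by (auto simp: supermodules2_def surj_image_vimage_eq)
  then show "L' \<in> (\<lambda>L. g ` L) ` supermodules2 N" by blast
qed (auto simp: supermodules2_def submodule2_image)

lemma zeta_supermodules_image: "zeta_supermodules (g ` N) s = zeta_supermodules N s"
  unfolding zeta_supermodules_def supermodules2_image
  by (subst sum.reindex) (auto intro: inj_on_subset[OF inj_image_lin_aut2] simp: index2_image)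

end

definition finite_index_submodules2 :: "('a::comm_ring_1 \<times> 'a) set set" where
  "finite_index_submodules2 = {L. is_submodule2 L \<and> finite_index2 L}"

lemma finite_supermodules2:
  assumes "L \<in> finite_index_submodules2"
  shows "finite (supermodules2 L)"
proof -
  have "quot_submodules L \<subseteq> Pow (quot2 L)" unfolding quot_submodules_def by auto
  moreover have "finite (quot2 L)"
    using assms by (simp add: finite_index_submodules2_def finite_index2_def)
  ultimately have "finite (quot_submodules L)" by (meson finite_Pow_iff finite_subset)
  moreover have "is_submodule2 L" using assms by (simp add: finite_index_submodules2_def)
  ultimately show ?thesis using bij_betw_supermodules2_quot_submodules bij_betw_finite by blast
qed

lemma finite_index_subreps_V2a_iff:
  assumes "a \<ge> 1"
  shows "Lam \<in> finite_index_subreps_V2a a \<longleftrightarrow>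
    Lam 1 \<in> finite_index_submodules2 \<and> (\<forall>j\<in>{2..a}. Lam j \<in> supermodules2 (Lam 1)) \<and>
    (\<forall>i. i \<notin> {1..a} \<longrightarrow> Lam i = UNIV)"
proof -
  have arrows: "(\<forall>(i, j)\<in>star_arrows a. V2a_map (i, j) ` Lam i \<subseteq> Lam j) \<longleftrightarrow>
      (\<forall>j\<in>{2..a}. Lam 1 \<subseteq> Lam j)"
    by (auto simp: star_arrows_def V2a_map_def)
  have vertices: "(\<forall>i\<in>{1..a}. P i) \<longleftrightarrow> P 1 \<and> (\<forall>j\<in>{2..a}. P j)" for P
  proof -
    have "{1..a} = insert 1 {2..a}" using assms by auto
    then show ?thesis by simp
  qed
  have fin: "finite_index2 (Lam j)"
    if "is_submodule2 (Lam 1)" "is_submodule2 (Lam j)" "Lam 1 \<subseteq> Lam j" "finite_index2 (Lam 1)" for j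
    using that finite_quot2_supermodule unfolding finite_index2_def by blast
  show ?thesis
    unfolding finite_index_subreps_V2a_def finite_index_submodules2_def supermodules2_def
      arrows vertices mem_Collect_eq
    using fin by auto
qed

definition star_subrep :: "nat \<Rightarrow> 'b set \<Rightarrow> (nat \<Rightarrow> 'b set) \<Rightarrow> nat \<Rightarrow> 'b set" where
  "star_subrep a L1 f i = (if i = 1 then L1 else if i \<in> {2..a} then f i else UNIV)"

lemma bij_betw_star_subrep:
  assumes a: "a \<ge> 1"
  shows "bij_betw (\<lambda>(L1, f). star_subrep a L1 f)
    (SIGMA L1:finite_index_submodules2. PiE {2..a} (\<lambda>_. supermodules2 L1))
    (finite_index_subreps_V2a a :: (nat \<Rightarrow> ('a::comm_ring_1 \<times> 'a) set) set)"
    (is "bij_betw ?f ?A ?B")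
proof (rule bij_betwI')
  fix X Y assume "X \<in> ?A" "Y \<in> ?A"
  then show "(?f X = ?f Y) = (X = Y)"
    by (cases X, cases Y) (auto simp: star_subrep_def fun_eq_iff PiE_iff extensional_def, metis+)
next
  fix X assume "X \<in> ?A"
  then show "?f X \<in> ?B"
    using a by (cases X) (auto simp: finite_index_subreps_V2a_iff[OF a] star_subrep_def)
next
  fix Lam assume "Lam \<in> ?B"
  then have "(Lam 1, restrict Lam {2..a}) \<in> ?A" and "Lam = ?f (Lam 1, restrict Lam {2..a})"
    by (auto simp: finite_index_subreps_V2a_iff[OF a] star_subrep_def fun_eq_iff)
  then show "\<exists>X\<in>?A. Lam = ?f X" by blast
qed

lemma sum_PiE_prod_star_subrep:
  fixes w :: "'b set \<Rightarrow> 'c::comm_semiring_1"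
  assumes "a \<ge> 1" "finite S"
  shows "(\<Sum>f\<in>PiE {2..a} (\<lambda>_. S). \<Prod>i\<in>{1..a}. w (star_subrep a L1 f i))
       = w L1 * (\<Sum>L\<in>S. w L) ^ (a - 1)"
proof -
  have "{1..a} = insert 1 {2..a}" using assms by auto
  then have "(\<Prod>i\<in>{1..a}. w (star_subrep a L1 f i)) = w L1 * (\<Prod>i\<in>{2..a}. w (f i))" for f
    by (simp add: star_subrep_def)
  then have "(\<Sum>f\<in>PiE {2..a} (\<lambda>_. S). \<Prod>i\<in>{1..a}. w (star_subrep a L1 f i))
      = w L1 * (\<Prod>i\<in>{2..a}. \<Sum>L\<in>S. w L)"
    using assms by (subst prod_sum_PiE) (auto simp: sum_distrib_left)
  then show ?thesis by simp
qed

lemma zeta_V2a_eq_infsum_finite_index_submodules2: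
  assumes a: "a \<ge> 1"
  shows "zeta_V2a TYPE('a::comm_ring_1) a s =
    infsum (\<lambda>L. ennreal (real (index2 L) powr (- s) * zeta_supermodules L s ^ (a - 1)))
      (finite_index_submodules2 :: ('a \<times> 'a) set set)"
proof -
  let ?w = "\<lambda>L :: ('a \<times> 'a) set. real (index2 L) powr (- s)"
  have fibre: "infsum (\<lambda>f. ennreal (\<Prod>i\<in>{1..a}. ?w (star_subrep a L1 f i)))
        (PiE {2..a} (\<lambda>_. supermodules2 L1))
      = ennreal (?w L1 * zeta_supermodules L1 s ^ (a - 1))"
    if "L1 \<in> finite_index_submodules2" for L1
  proof -
    have fin: "finite (supermodules2 L1)" using finite_supermodules2[OF that] .
    then have "infsum (\<lambda>f. ennreal (\<Prod>i\<in>{1..a}. ?w (star_subrep a L1 f i)))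
          (PiE {2..a} (\<lambda>_. supermodules2 L1))
        = ennreal (\<Sum>f\<in>PiE {2..a} (\<lambda>_. supermodules2 L1). \<Prod>i\<in>{1..a}. ?w (star_subrep a L1 f i))"
      by (simp add: finite_PiE sum_ennreal prod_nonneg)
    then show ?thesis
      unfolding zeta_supermodules_def using sum_PiE_prod_star_subrep[OF a fin, of ?w] by (simp only:)
  qed
  have "zeta_V2a TYPE('a) a s
      = infsum (\<lambda>X. ennreal (\<Prod>i\<in>{1..a}. ?w ((\<lambda>(L1, f). star_subrep a L1 f) X i)))
          (SIGMA L1:finite_index_submodules2. PiE {2..a} (\<lambda>_. supermodules2 L1))"
    unfolding zeta_V2a_def by (rule infsum_reindex_bij_betw[OF bij_betw_star_subrep[OF a], symmetric])
  also have "\<dots> = infsum (\<lambda>L1. ennreal (?w L1 * zeta_supermodules L1 s ^ (a - 1)))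
      finite_index_submodules2"
    unfolding infsum_Sigma_ennreal case_prod_conv by (rule infsum_cong) (rule fibre)
  finally show ?thesis .
qed

section \<open>Lattices attached to points of the projective line\<close>

definition det2 :: "'a::comm_ring_1 \<times> 'a \<Rightarrow> 'a \<times> 'a \<Rightarrow> 'a" where
  "det2 u v = fst u * snd v - snd u * fst v"

text \<open>\<^term>\<open>Inl d\<close> and \<^term>\<open>Inr c\<close> encode the points \<open>[1 : d]\<close> and \<open>[c : 1]\<close> of the two affine
  charts of the projective line.\<close>

definition P1_point :: "'a::comm_ring_1 + 'a \<Rightarrow> 'a \<times> 'a" where
  "P1_point w = (case w of Inl d \<Rightarrow> (1, d) | Inr c \<Rightarrow> (c, 1))"

definition P1_compl :: "'a::comm_ring_1 + 'a \<Rightarrow> 'a \<times> 'a" where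
  "P1_compl w = (case w of Inl _ \<Rightarrow> (0, 1) | Inr _ \<Rightarrow> (1, 0))"

definition P1_chart :: "'a::comm_ring_1 + 'a \<Rightarrow> 'a \<times> 'a \<Rightarrow> 'a \<times> 'a" where
  "P1_chart w v = smult2 (fst v) (P1_compl w) + smult2 (snd v) (P1_point w)"

lemma P1_point_simps [simp]: "P1_point (Inl d) = (1, d)" "P1_point (Inr c) = (c, 1)"
  by (simp_all add: P1_point_def)

lemma P1_chart_simps [simp]:
  "P1_chart (Inl d) (x, y) = (y, x + y * d)" "P1_chart (Inr c) (x, y) = (x + y * c, y)"
  by (simp_all add: P1_chart_def P1_compl_def algebra_simps)

lemma lin_aut2_P1_chart: "lin_aut2 (P1_chart w :: 'a::comm_ring_1 \<times> 'a \<Rightarrow> _)"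
proof (cases w)
  case (Inl d)
  have "bij (P1_chart w)"
    by (rule o_bij[where g = "\<lambda>v. (snd v - fst v * d, fst v)"]) (auto simp: fun_eq_iff Inl)
  then show ?thesis by (auto simp: lin_aut2_def Inl algebra_simps)
next
  case (Inr c)
  have "bij (P1_chart w)"
    by (rule o_bij[where g = "\<lambda>v. (fst v - snd v * c, snd v)"]) (auto simp: fun_eq_iff Inr)
  then show ?thesis by (auto simp: lin_aut2_def Inr algebra_simps)
qed

lemma P1_chart_image_lat2:
  "P1_chart w ` lat2 p m 0 = {v. p ^ m dvd det2 (P1_point w) (v :: 'a::comm_ring_1 \<times> 'a)}"
proof (intro equalityI subsetI)
  fix v assume "v \<in> P1_chart w ` lat2 p m 0"
  then obtain x y where "p ^ m dvd x" "v = P1_chart w (x, y)" by (auto simp: mem_lat2_iff)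
  then show "v \<in> {v. p ^ m dvd det2 (P1_point w) v}"
    by (cases w) (simp_all add: det2_def algebra_simps)
next
  fix v assume v: "v \<in> {v. p ^ m dvd det2 (P1_point w) v}"
  obtain v1 v2 where v12: "v = (v1, v2)" by (cases v)
  show "v \<in> P1_chart w ` lat2 p m 0"
  proof (cases w)
    case (Inl d)
    then have "v = P1_chart w (v2 - v1 * d, v1)" "(v2 - v1 * d, v1) \<in> lat2 p m 0"
      using v by (auto simp: v12 mem_lat2_iff det2_def algebra_simps)
    then show ?thesis by blast
  next
    case (Inr c)
    then have "v = P1_chart w (v1 - v2 * c, v2)" "(v1 - v2 * c, v2) \<in> lat2 p m 0"
      using v by (auto simp: v12 mem_lat2_iff det2_def algebra_simps)
    then show ?thesis by blast
  qed
qed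

lemma smult2_image_lat2: "smult2 (p ^ r0) ` lat2 p m 0 = lat2 (p :: 'a::comm_ring_1) (r0 + m) r0"
proof (intro equalityI subsetI)
  fix v assume "v \<in> lat2 p (r0 + m) r0"
  then obtain x y where "v = (p ^ (r0 + m) * x, p ^ r0 * y)" unfolding lat2_def by auto
  then have "v = smult2 (p ^ r0) (p ^ m * x, p ^ 0 * y)" "(p ^ m * x, p ^ 0 * y) \<in> lat2 p m 0"
    by (auto simp: power_add algebra_simps lat2_def)
  then show "v \<in> smult2 (p ^ r0) ` lat2 p m 0" by blast
qed (auto simp: lat2_def power_add algebra_simps)

text \<open>The lattice \<open>p\<^sup>r\<^sup>0 (o P + p\<^sup>r\<^sup>1 o\<^sup>2)\<close> attached to the point \<open>P = P1_point w\<close>.\<close>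

definition P1_lattice :: "'a::comm_ring_1 \<Rightarrow> nat \<Rightarrow> nat \<Rightarrow> 'a + 'a \<Rightarrow> ('a \<times> 'a) set" where
  "P1_lattice p r0 r1 w = smult2 (p ^ r0) ` {v. p ^ r1 dvd det2 (P1_point w) v}"

lemma P1_lattice_eq_image: "P1_lattice p r0 r1 w = P1_chart w ` lat2 p (r0 + r1) r0"
proof -
  have "smult2 (p ^ r0) ` (P1_chart w ` A) = P1_chart w ` (smult2 (p ^ r0) ` A)" for A
    by (simp add: image_image lin_aut2_smult[OF lin_aut2_P1_chart])
  then show ?thesis
    unfolding P1_lattice_def P1_chart_image_lat2[symmetric] by (simp add: smult2_image_lat2)
qed

lemma submodule2_eq_P1_chart_image_lat2:
  fixes K :: "('a::comm_ring_1 \<times> 'a) set"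
  assumes K: "is_submodule2 K" and point: "P1_point w \<in> K"
    and compl: "smult2 (p ^ m) (P1_compl w) \<in> K"
    and least: "\<And>t. smult2 t (P1_compl w) \<in> K \<Longrightarrow> p ^ m dvd t"
  shows "K = P1_chart w ` lat2 p m 0"
proof -
  have chart: "P1_chart w (x, y) \<in> K \<longleftrightarrow> p ^ m dvd x" for x y
  proof -
    have y: "smult2 y (P1_point w) \<in> K" using point by (rule submodule2_smult[OF K])
    have "P1_chart w (x, y) \<in> K \<longleftrightarrow> smult2 x (P1_compl w) \<in> K"
      unfolding P1_chart_def fst_conv snd_conv
      using submodule2_add[OF K _ y] submodule2_diff[OF K _ y] by fastforce
    also have "\<dots> \<longleftrightarrow> p ^ m dvd x"
    proof
      assume "p ^ m dvd x"
      then obtain z where "x = p ^ m * z" by (rule dvdE)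
      then have "smult2 x (P1_compl w) = smult2 z (smult2 (p ^ m) (P1_compl w))"
        by (simp add: smult2_def algebra_simps)
      then show "smult2 x (P1_compl w) \<in> K" using submodule2_smult[OF K compl] by simp
    qed (rule least)
    finally show ?thesis .
  qed
  show ?thesis
  proof (intro equalityI subsetI)
    fix v assume "v \<in> K"
    obtain x y where "v = P1_chart w (x, y)"
      using lin_aut2_surj[OF lin_aut2_P1_chart] by (metis surjD surj_pair)
    then show "v \<in> P1_chart w ` lat2 p m 0" using \<open>v \<in> K\<close> chart by (auto simp: mem_lat2_iff)
  qed (auto simp: mem_lat2_iff chart)
qed

lemma det2_dvd_cong:
  assumes "c dvd fst P - fst P'" "c dvd snd P - snd P'"
  shows "c dvd det2 P v \<longleftrightarrow> c dvd det2 P' (v :: 'a::comm_ring_1 \<times> 'a)"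
proof -
  have "det2 P v = det2 P' v + ((fst P - fst P') * snd v - (snd P - snd P') * fst v)"
    by (simp add: det2_def algebra_simps)
  moreover have "c dvd (fst P - fst P') * snd v - (snd P - snd P') * fst v"
    using assms by (simp add: dvd_diff)
  ultimately show ?thesis by (metis dvd_add_left_iff)
qed

section \<open>Compact discrete valuation rings\<close>

locale compact_dvr_ring =
  fixes \<pi> :: "'a::idom" and q :: nat
  assumes compact_dvr: "compact_dvr \<pi> q"
begin

lemma pi_nonzero: "\<pi> \<noteq> 0" and pi_not_unit: "\<not> \<pi> dvd 1"
  using compact_dvr unfolding compact_dvr_def by blast+

lemma eq_unit_mult_pi_power: "x \<noteq> 0 \<Longrightarrow> \<exists>u n. u dvd 1 \<and> x = u * \<pi> ^ n"
  using compact_dvr unfolding compact_dvr_def by blast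

lemma unit_if_not_pi_dvd: assumes "\<not> \<pi> dvd x" shows "x dvd 1"
proof -
  obtain u n where u: "u dvd 1" "x = u * \<pi> ^ n"
    using assms eq_unit_mult_pi_power[of x] by fastforce
  have "n = 0" using assms u by (metis dvd_mult dvd_power neq0_conv)
  then show ?thesis using u by simp
qed

lemma pi_power_dvd_pi_power_iff: "\<pi> ^ m dvd \<pi> ^ n \<longleftrightarrow> m \<le> n"
proof
  assume "\<pi> ^ m dvd \<pi> ^ n"
  show "m \<le> n"
  proof (rule ccontr)
    assume "\<not> m \<le> n"
    then have "\<pi> ^ n * \<pi> ^ (m - n) dvd \<pi> ^ n * 1"
      using \<open>\<pi> ^ m dvd \<pi> ^ n\<close> by (simp add: power_add[symmetric])
    then have "\<pi> ^ (m - n) dvd 1" using pi_nonzero by (subst (asm) dvd_mult_cancel_left) simp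
    moreover have "\<pi> dvd \<pi> ^ (m - n)" using \<open>\<not> m \<le> n\<close> by (simp add: dvd_power)
    ultimately show False using pi_not_unit dvd_trans by blast
  qed
qed (rule le_imp_power_dvd)

lemma one_minus_pi_mult_unit: "(1 - \<pi> * x) dvd 1"
  by (rule unit_if_not_pi_dvd) (metis pi_not_unit dvd_add_left_iff dvd_triv_left diff_add_cancel)

definition residue_class :: "'a \<Rightarrow> 'a set" where
  "residue_class x = {x + \<pi> * y | y. True}"

lemma card_residue_classes: "finite (range residue_class) \<and> card (range residue_class) = q"
proof -
  have "residue_classes \<pi> = range residue_class"
    unfolding residue_classes_def residue_class_def ..
  then show ?thesis using compact_dvr unfolding compact_dvr_def by simp
qed

lemma mem_residue_class_iff: "z \<in> residue_class x \<longleftrightarrow> \<pi> dvd z - x"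
  unfolding residue_class_def by (auto simp: dvd_def algebra_simps)

lemma residue_class_eq_iff: "residue_class x = residue_class y \<longleftrightarrow> \<pi> dvd x - y"
proof
  assume "residue_class x = residue_class y"
  then show "\<pi> dvd x - y" by (metis mem_residue_class_iff diff_self dvd_0_right)
next
  assume "\<pi> dvd x - y"
  then have "\<pi> dvd z - x \<longleftrightarrow> \<pi> dvd z - y" for z
    by (metis diff_add_cancel add_diff_eq dvd_add_left_iff add.commute diff_diff_eq2)
  then show "residue_class x = residue_class y" by (auto simp: mem_residue_class_iff)
qed

definition digit :: "'a \<Rightarrow> 'a" where
  "digit x = (SOME z. z \<in> residue_class x)"

definition digits :: "'a set" where
  "digits = range digit"

lemma pi_dvd_minus_digit: "\<pi> dvd x - digit x"
  using someI[of "\<lambda>z. z \<in> residue_class x" x]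
  by (simp add: digit_def mem_residue_class_iff) (metis dvd_minus_iff minus_diff_eq)

lemma digit_eq_iff: "digit x = digit y \<longleftrightarrow> \<pi> dvd x - y"
proof
  assume "digit x = digit y"
  then have "x - y = (x - digit x) - (y - digit y)" by simp
  then show "\<pi> dvd x - y" using pi_dvd_minus_digit by (metis dvd_diff)
qed (simp add: digit_def residue_class_eq_iff[symmetric])

lemma digits_complete: "\<exists>r\<in>digits. \<pi> dvd x - r"
  using pi_dvd_minus_digit by (auto simp: digits_def)

lemma digits_unique:
  assumes "r \<in> digits" "r' \<in> digits" "\<pi> dvd r - r'"
  shows "r = r'"
proof -
  obtain x y where r: "r = digit x" "r' = digit y" using assms(1,2) by (auto simp: digits_def)
  have "x - y = (x - r) - (y - r') + (r - r')" by simp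
  then have "\<pi> dvd x - y" using assms(3) pi_dvd_minus_digit r by (metis dvd_add dvd_diff)
  then show ?thesis using r digit_eq_iff by simp
qed

lemma card_digits: "finite digits \<and> card digits = q"
proof -
  have "digits = (\<lambda>C. SOME z. z \<in> C) ` range residue_class"
    by (simp add: digits_def digit_def image_image)
  moreover have "inj_on (\<lambda>C. SOME z. z \<in> C) (range residue_class)"
    by (rule inj_onI, clarify) (simp add: digit_def[symmetric] digit_eq_iff residue_class_eq_iff)
  ultimately show ?thesis using card_residue_classes by (simp add: card_image)
qed

lemma two_le_q: "2 \<le> q"
proof -
  have "residue_class 0 \<noteq> residue_class 1"
    using pi_not_unit by (simp add: residue_class_eq_iff)
  then have "2 = card {residue_class 0, residue_class 1}" by simp
  also have "\<dots> \<le> card (range residue_class)"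
    using card_residue_classes by (intro card_mono) auto
  finally have "2 \<le> card (range residue_class)" .
  then show ?thesis using card_residue_classes by simp
qed

fun residue_reps :: "nat \<Rightarrow> 'a set" where
  "residue_reps 0 = {0}"
| "residue_reps (Suc n) = (\<lambda>(r, s). r + \<pi> * s) ` (digits \<times> residue_reps n)"

lemma residue_reps_complete: "\<exists>r\<in>residue_reps n. \<pi> ^ n dvd x - r"
proof (induction n arbitrary: x)
  case (Suc n)
  obtain r y where r: "r \<in> digits" "x - r = \<pi> * y" using digits_complete by (metis dvdE)
  obtain t where t: "t \<in> residue_reps n" "\<pi> ^ n dvd y - t" using Suc by blast
  have "x - (r + \<pi> * t) = \<pi> * (y - t)" using r by (simp add: algebra_simps)
  then have "\<pi> ^ Suc n dvd x - (r + \<pi> * t)" using t by simp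
  then show ?case using r t by force
qed simp

lemma residue_reps_unique:
  "r \<in> residue_reps n \<Longrightarrow> r' \<in> residue_reps n \<Longrightarrow> \<pi> ^ n dvd r - r' \<Longrightarrow> r = r'"
proof (induction n arbitrary: r r')
  case (Suc n)
  then obtain a b a' b' where ab: "a \<in> digits" "b \<in> residue_reps n" "r = a + \<pi> * b"
    and ab': "a' \<in> digits" "b' \<in> residue_reps n" "r' = a' + \<pi> * b'" by auto
  have "r - r' = (a - a') + \<pi> * (b - b')" using ab ab' by (simp add: algebra_simps)
  then have "\<pi> dvd (a - a') + \<pi> * (b - b')" using Suc.prems(3) by (metis dvd_mult_left power_Suc)
  then have "a = a'" using ab ab' digits_unique by (simp add: dvd_add_left_iff)
  then have "\<pi> * \<pi> ^ n dvd \<pi> * (b - b')" using Suc.prems(3) ab ab' by (simp add: algebra_simps)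
  then have "b = b'" using Suc.IH ab ab' pi_nonzero by simp
  then show ?case using ab ab' \<open>a = a'\<close> by simp
qed simp

lemma card_residue_reps: "finite (residue_reps n) \<and> card (residue_reps n) = q ^ n"
proof (induction n)
  case (Suc n)
  have "inj_on (\<lambda>(r, s). r + \<pi> * s) (digits \<times> residue_reps n)"
  proof (rule inj_onI, clarify)
    fix a b a' b' assume h: "a \<in> digits" "b \<in> residue_reps n" "a' \<in> digits" "b' \<in> residue_reps n"
      "a + \<pi> * b = a' + \<pi> * b'"
    then have "a - a' = \<pi> * (b' - b)" by (simp add: algebra_simps)
    then have "a = a'" using h digits_unique by (metis dvd_triv_left)
    then show "a = a' \<and> b = b'" using h pi_nonzero by simp
  qed
  then show ?case using Suc card_digits by (simp add: card_image card_cartesian_product)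
qed simp

lemma quot2_lat2:
  "quot2 (lat2 \<pi> l1 l2) = (\<lambda>(a, b). coset2 (lat2 \<pi> l1 l2) (a, b)) ` (residue_reps l1 \<times> residue_reps l2)"
proof (intro equalityI subsetI)
  fix C assume "C \<in> quot2 (lat2 \<pi> l1 l2)"
  then obtain x y where C: "C = coset2 (lat2 \<pi> l1 l2) (x, y)" unfolding quot2_def by auto
  obtain a b where ab: "a \<in> residue_reps l1" "\<pi> ^ l1 dvd x - a" "b \<in> residue_reps l2" "\<pi> ^ l2 dvd y - b"
    using residue_reps_complete by meson
  then have "C = coset2 (lat2 \<pi> l1 l2) (a, b)"
    unfolding C coset2_eq_iff[OF submodule2_lat2] by (simp add: mem_lat2_iff)
  then show "C \<in> (\<lambda>(a, b). coset2 (lat2 \<pi> l1 l2) (a, b)) ` (residue_reps l1 \<times> residue_reps l2)"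
    using ab by force
qed (auto simp: quot2_def)

lemma index2_lat2: "finite (quot2 (lat2 \<pi> l1 l2)) \<and> index2 (lat2 \<pi> l1 l2) = q ^ (l1 + l2)"
proof -
  have "inj_on (\<lambda>(a, b). coset2 (lat2 \<pi> l1 l2) (a, b)) (residue_reps l1 \<times> residue_reps l2)"
    by (rule inj_onI)
      (auto simp: coset2_eq_iff[OF submodule2_lat2] mem_lat2_iff dest: residue_reps_unique)
  then show ?thesis
    unfolding index2_def quot2_lat2 using card_residue_reps
    by (simp add: card_image card_cartesian_product power_add)
qed

text \<open>By pigeonhole two of the cosets of the \<open>\<pi>\<^sup>k e\<close> coincide, say for \<open>i < j\<close>; then
  \<open>\<pi>\<^sup>i (1 - \<pi>\<^sup>j\<^sup>-\<^sup>i) e \<in> L\<close>, and \<open>1 - \<pi>\<^sup>j\<^sup>-\<^sup>i\<close> is a unit.\<close>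

lemma finite_quot2_smult2_pi_power_mem:
  assumes L: "is_submodule2 L" and fin: "finite (quot2 L)"
  shows "\<exists>i. smult2 (\<pi> ^ i) e \<in> L"
proof -
  define f where "f k = coset2 L (smult2 (\<pi> ^ k) e)" for k
  have "range f \<subseteq> quot2 L" unfolding f_def quot2_def by auto
  then have "\<not> inj f" using fin finite_subset infinite_UNIV_nat finite_imageD by blast
  then obtain i j where ij: "i < j" "f i = f j" unfolding inj_def by (metis linorder_neqE_nat)
  obtain u where u: "1 = (1 - \<pi> * \<pi> ^ (j - i - 1)) * u" using one_minus_pi_mult_unit by (metis dvdE)
  have "\<pi> ^ j = \<pi> ^ i * (\<pi> * \<pi> ^ (j - i - 1))"
    using ij(1) by (simp flip: power_add power_Suc)
  then have "\<pi> ^ i - \<pi> ^ j = \<pi> ^ i * (1 - \<pi> * \<pi> ^ (j - i - 1))" by (simp add: algebra_simps)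
  then have "u * (\<pi> ^ i - \<pi> ^ j) = \<pi> ^ i" using u by (metis mult.assoc mult.commute mult_1_right)
  moreover have "smult2 (\<pi> ^ i) e - smult2 (\<pi> ^ j) e \<in> L"
    using ij(2) coset2_eq_iff[OF L] unfolding f_def by blast
  then have "smult2 u (smult2 (\<pi> ^ i) e - smult2 (\<pi> ^ j) e) \<in> L" by (rule submodule2_smult[OF L])
  moreover have "smult2 u (smult2 (\<pi> ^ i) e - smult2 (\<pi> ^ j) e) = smult2 (u * (\<pi> ^ i - \<pi> ^ j)) e"
    by (simp add: smult2_def algebra_simps)
  ultimately show ?thesis by metis
qed

lemma finite_quot2_axis_powers_mem:
  assumes L: "is_submodule2 L" and fin: "finite (quot2 L)"
  shows "\<exists>N. (\<pi> ^ N, 0) \<in> L \<and> (0, \<pi> ^ N) \<in> L"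
proof -
  obtain i j where "smult2 (\<pi> ^ i) (1, 0) \<in> L" "smult2 (\<pi> ^ j) (0, 1) \<in> L"
    using finite_quot2_smult2_pi_power_mem[OF assms] by blast
  then have "smult2 (\<pi> ^ j) (smult2 (\<pi> ^ i) (1, 0)) \<in> L" "smult2 (\<pi> ^ i) (smult2 (\<pi> ^ j) (0, 1)) \<in> L"
    using submodule2_smult[OF L] by blast+
  then have "(\<pi> ^ (i + j), 0) \<in> L \<and> (0, \<pi> ^ (i + j)) \<in> L" by (simp add: power_add mult.commute)
  then show ?thesis by blast
qed

section \<open>Classification of finite-index lattices\<close>

lemma primitive_decomposition:
  assumes L: "is_submodule2 L" and N: "(\<pi> ^ N, 0) \<in> L"
  obtains r0 L' v where "is_submodule2 L'" "L = smult2 (\<pi> ^ r0) ` L'" "L \<subseteq> L'"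
    "v \<in> L'" "\<not> (\<pi> dvd fst v \<and> \<pi> dvd snd v)"
proof -
  define D where "D r \<longleftrightarrow> (\<forall>v\<in>L. \<pi> ^ r dvd fst v \<and> \<pi> ^ r dvd snd v)" for r
  have bound: "r \<le> N" if "D r" for r
    using that N pi_power_dvd_pi_power_iff unfolding D_def by fastforce
  define r0 where "r0 = Greatest D"
  have "D 0" by (simp add: D_def)
  then have D0: "D r0" and not_D: "\<not> D (Suc r0)"
    using GreatestI_nat[of D 0 N] Greatest_le_nat[of D "Suc r0" N] bound unfolding r0_def by auto
  define L' where "L' = smult2 (\<pi> ^ r0) -` L"
  have L_eq: "L = smult2 (\<pi> ^ r0) ` L'"
  proof (intro equalityI subsetI)
    fix v assume "v \<in> L"
    then obtain a b where "fst v = \<pi> ^ r0 * a" "snd v = \<pi> ^ r0 * b"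
      using D0 unfolding D_def by (meson dvdE)
    then have v: "v = smult2 (\<pi> ^ r0) (a, b)" by (cases v) simp
    then have "(a, b) \<in> L'" using \<open>v \<in> L\<close> unfolding L'_def by simp
    then show "v \<in> smult2 (\<pi> ^ r0) ` L'" using v by blast
  qed (auto simp: L'_def)
  have "is_submodule2 L'"
    unfolding L'_def by (rule submodule2_vimage[OF _ _ L]) (simp_all add: smult2_def algebra_simps)
  moreover have "L \<subseteq> L'" unfolding L'_def using submodule2_smult[OF L] by blast
  moreover obtain v0 where "v0 \<in> L" and v0: "\<not> (\<pi> ^ Suc r0 dvd fst v0 \<and> \<pi> ^ Suc r0 dvd snd v0)"
    using not_D unfolding D_def by blast
  then obtain v where v: "v \<in> L'" "v0 = smult2 (\<pi> ^ r0) v" using L_eq by blast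
  moreover have "\<not> (\<pi> dvd fst v \<and> \<pi> dvd snd v)"
  proof
    assume "\<pi> dvd fst v \<and> \<pi> dvd snd v"
    then have "\<pi> ^ r0 * \<pi> dvd \<pi> ^ r0 * fst v \<and> \<pi> ^ r0 * \<pi> dvd \<pi> ^ r0 * snd v"
      by (simp add: mult_dvd_mono)
    then show False using v0 v(2) by (simp add: smult2_def power_Suc2)
  qed
  ultimately show ?thesis using L_eq that by blast
qed

lemma least_pi_power_smult2_mem:
  assumes K: "is_submodule2 K" and N: "smult2 (\<pi> ^ N) e \<in> K"
  obtains m where "smult2 (\<pi> ^ m) e \<in> K" "\<And>t. smult2 t e \<in> K \<Longrightarrow> \<pi> ^ m dvd t"
proof
  define m where "m = (LEAST m. smult2 (\<pi> ^ m) e \<in> K)"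
  show m: "smult2 (\<pi> ^ m) e \<in> K" unfolding m_def using N by (rule LeastI)
  fix t assume t: "smult2 t e \<in> K"
  show "\<pi> ^ m dvd t"
  proof (cases "t = 0")
    case False
    then obtain u n where u: "u dvd 1" "t = u * \<pi> ^ n" using eq_unit_mult_pi_power by blast
    from u(1) obtain u' where u': "1 = u * u'" by (rule dvdE)
    have "smult2 u' (smult2 t e) = smult2 (\<pi> ^ n) e"
      using u u' by (simp add: smult2_def algebra_simps)
    then have "smult2 (\<pi> ^ n) e \<in> K" using submodule2_smult[OF K t] by metis
    then have "m \<le> n" unfolding m_def by (rule Least_le)
    then show ?thesis using u by (simp add: pi_power_dvd_pi_power_iff)
  qed simp
qed

lemma submodule2_containing_Inl_point:
  assumes K: "is_submodule2 K" and N: "(0, \<pi> ^ N) \<in> K" and point: "(1, d0) \<in> K"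
  obtains m d where "d \<in> residue_reps m" "K = {x. \<pi> ^ m dvd det2 (1, d) x}"
proof -
  obtain m where m: "smult2 (\<pi> ^ m) (P1_compl (Inl d0)) \<in> K"
    "\<And>t. smult2 t (P1_compl (Inl d0)) \<in> K \<Longrightarrow> \<pi> ^ m dvd t"
    using least_pi_power_smult2_mem[OF K, of N "P1_compl (Inl d0)"] N by (auto simp: P1_compl_def)
  have "K = {x. \<pi> ^ m dvd det2 (1, d0) x}"
    using submodule2_eq_P1_chart_image_lat2[OF K _ m] point by (simp add: P1_chart_image_lat2)
  moreover obtain d where "d \<in> residue_reps m" "\<pi> ^ m dvd d0 - d" using residue_reps_complete by blast
  ultimately show ?thesis using that det2_dvd_cong[of "\<pi> ^ m" "(1, d0)" "(1, d)"] by simp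
qed

lemma submodule2_containing_Inr_point:
  assumes K: "is_submodule2 K" and N: "(\<pi> ^ N, 0) \<in> K" and point: "(c0, 1) \<in> K"
    and fst_pi_dvd: "\<forall>u\<in>K. \<pi> dvd fst u"
  obtains m e where "m \<noteq> 0" "e \<in> residue_reps (m - 1)" "K = {x. \<pi> ^ m dvd det2 (\<pi> * e, 1) x}"
proof -
  obtain m where m: "smult2 (\<pi> ^ m) (P1_compl (Inr c0)) \<in> K"
    "\<And>t. smult2 t (P1_compl (Inr c0)) \<in> K \<Longrightarrow> \<pi> ^ m dvd t"
    using least_pi_power_smult2_mem[OF K, of N "P1_compl (Inr c0)"] N by (auto simp: P1_compl_def)
  have "K = {x. \<pi> ^ m dvd det2 (c0, 1) x}"
    using submodule2_eq_P1_chart_image_lat2[OF K _ m] point by (simp add: P1_chart_image_lat2)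
  moreover have "m \<noteq> 0"
  proof
    assume "m = 0"
    then have "(1, 0) \<in> K" using m(1) by (simp add: P1_compl_def)
    then have "\<pi> dvd 1" using fst_pi_dvd by (metis fst_conv)
    then show False using pi_not_unit by blast
  qed
  moreover obtain e0 where "c0 = \<pi> * e0" using fst_pi_dvd point by fastforce
  moreover obtain e where "e \<in> residue_reps (m - 1)" "\<pi> ^ (m - 1) dvd e0 - e"
    using residue_reps_complete by blast
  moreover have "\<pi> ^ m = \<pi> * \<pi> ^ (m - 1)" using \<open>m \<noteq> 0\<close> by (cases m) auto
  ultimately have "\<pi> ^ m dvd c0 - \<pi> * e" by (simp add: right_diff_distrib[symmetric])
  then show ?thesis
    using that \<open>m \<noteq> 0\<close> \<open>e \<in> residue_reps (m - 1)\<close> \<open>K = {x. \<pi> ^ m dvd det2 (c0, 1) x}\<close>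
      det2_dvd_cong[of "\<pi> ^ m" "(c0, 1)" "(\<pi> * e, 1)"]
    by simp
qed

text \<open>Representatives of the points of the projective line over \<open>o / \<pi>\<^sup>m\<close>: all \<open>[1 : d]\<close>, and
  the \<open>[c : 1]\<close> not in the first chart, i.e. those with \<open>\<pi> dvd c\<close>.\<close>

definition P1_reps :: "nat \<Rightarrow> ('a + 'a) set" where
  "P1_reps m = Inl ` residue_reps m \<union> (if m = 0 then {} else Inr ` (*) \<pi> ` residue_reps (m - 1))"

lemma primitive_submodule2_classification:
  assumes K: "is_submodule2 K" and N: "(\<pi> ^ N, 0) \<in> K" "(0, \<pi> ^ N) \<in> K"
    and v: "v \<in> K" "\<not> (\<pi> dvd fst v \<and> \<pi> dvd snd v)"
  obtains m w where "w \<in> P1_reps m" "K = {x. \<pi> ^ m dvd det2 (P1_point w) x}"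
proof (cases "\<exists>u\<in>K. \<not> \<pi> dvd fst u")
  case True
  then obtain u u' where u: "u \<in> K" "1 = fst u * u'" using unit_if_not_pi_dvd by (metis dvdE)
  then have "smult2 u' u = (1, u' * snd u)" by (cases u) (simp add: mult.commute)
  then have "(1, u' * snd u) \<in> K" using submodule2_smult[OF K u(1)] by metis
  then obtain m d where "d \<in> residue_reps m" "K = {x. \<pi> ^ m dvd det2 (1, d) x}"
    using submodule2_containing_Inl_point[OF K N(2)] by blast
  then have "Inl d \<in> P1_reps m" "K = {x. \<pi> ^ m dvd det2 (P1_point (Inl d)) x}"
    by (simp_all add: P1_reps_def)
  then show ?thesis by (rule that)
next
  case False
  then have "\<not> \<pi> dvd snd v" using v by blast
  then obtain u' where "1 = snd v * u'" using unit_if_not_pi_dvd by (metis dvdE)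
  then have "smult2 u' v = (u' * fst v, 1)" by (cases v) (simp add: mult.commute)
  then have "(u' * fst v, 1) \<in> K" using submodule2_smult[OF K v(1)] by metis
  then obtain m e where "m \<noteq> 0" "e \<in> residue_reps (m - 1)" "K = {x. \<pi> ^ m dvd det2 (\<pi> * e, 1) x}"
    using submodule2_containing_Inr_point[OF K N(1)] False by blast
  then have "Inr (\<pi> * e) \<in> P1_reps m" "K = {x. \<pi> ^ m dvd det2 (P1_point (Inr (\<pi> * e))) x}"
    by (auto simp: P1_reps_def)
  then show ?thesis by (rule that)
qed

lemma finite_index_submodule2_eq_P1_lattice:
  assumes "L \<in> finite_index_submodules2"
  obtains r0 r1 w where "w \<in> P1_reps r1" "L = P1_lattice \<pi> r0 r1 w"
proof -
  have L: "is_submodule2 L" and fin: "finite (quot2 L)"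
    using assms by (simp_all add: finite_index_submodules2_def finite_index2_def)
  obtain N where N: "(\<pi> ^ N, 0) \<in> L" "(0, \<pi> ^ N) \<in> L"
    using finite_quot2_axis_powers_mem[OF L fin] by blast
  obtain r0 L' v where L': "is_submodule2 L'" "L = smult2 (\<pi> ^ r0) ` L'" "L \<subseteq> L'"
    and v: "v \<in> L'" "\<not> (\<pi> dvd fst v \<and> \<pi> dvd snd v)"
    by (rule primitive_decomposition[OF L N(1)])
  have N': "(\<pi> ^ N, 0) \<in> L'" "(0, \<pi> ^ N) \<in> L'" using N L'(3) by auto
  obtain r1 w where w: "w \<in> P1_reps r1" and L'_eq: "L' = {x. \<pi> ^ r1 dvd det2 (P1_point w) x}"
    by (rule primitive_submodule2_classification[OF L'(1) N' v])
  have "L = P1_lattice \<pi> r0 r1 w" by (simp add: L'(2) L'_eq P1_lattice_def)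
  with w show ?thesis by (rule that)
qed

lemma finite_P1_reps: "finite (P1_reps m)"
  using card_residue_reps by (simp add: P1_reps_def)

lemma card_P1_reps: "card (P1_reps m) = q ^ m + (if m = 0 then 0 else q ^ (m - 1))"
proof (cases "m = 0")
  case False
  define A :: "('a + 'a) set" where "A = Inl ` residue_reps m"
  define B :: "('a + 'a) set" where "B = Inr ` (*) \<pi> ` residue_reps (m - 1)"
  have "card A = q ^ m" using card_residue_reps by (simp add: A_def card_image)
  moreover have "inj_on (\<lambda>e. Inr (\<pi> * e) :: 'a + 'a) (residue_reps (m - 1))"
    using pi_nonzero by (auto simp: inj_on_def)
  then have "card B = q ^ (m - 1)" using card_residue_reps by (simp add: B_def image_image card_image)
  moreover have "card (A \<union> B) = card A + card B"
    using card_residue_reps by (intro card_Un_disjoint) (auto simp: A_def B_def)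
  ultimately show ?thesis using False by (simp add: P1_reps_def A_def B_def)
qed (simp add: P1_reps_def)

lemma P1_reps_det2_dvd_unique:
  assumes w: "w \<in> P1_reps m" and w': "w' \<in> P1_reps m"
    and dvd: "\<pi> ^ m dvd det2 (P1_point w') (P1_point w)"
  shows "w = w'"
proof -
  have no_mixed: False if "m \<noteq> 0" "\<pi> ^ m dvd \<pi> * y - 1" for y
  proof -
    have "\<pi> dvd \<pi> ^ m" using that(1) by (cases m) auto
    then have "\<pi> dvd \<pi> * y - (\<pi> * y - 1)" using that(2) by (meson dvd_diff dvd_trans dvd_triv_left)
    then show False using pi_not_unit by simp
  qed
  consider (ll) d d' where "w = Inl d" "w' = Inl d'" "d \<in> residue_reps m" "d' \<in> residue_reps m"
    | (lr) d e' where "w = Inl d" "w' = Inr (\<pi> * e')" "m \<noteq> 0"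
    | (rl) e d' where "w = Inr (\<pi> * e)" "w' = Inl d'" "m \<noteq> 0"
    | (rr) e e' where "w = Inr (\<pi> * e)" "w' = Inr (\<pi> * e')" "m \<noteq> 0"
        "e \<in> residue_reps (m - 1)" "e' \<in> residue_reps (m - 1)"
    using w w' unfolding P1_reps_def by (cases w; cases w') (auto split: if_splits)
  then show ?thesis
  proof cases
    case ll
    then show ?thesis using dvd residue_reps_unique by (simp add: det2_def)
  next
    case lr
    then have "\<pi> ^ m dvd \<pi> * (e' * d) - 1" using dvd by (simp add: det2_def mult.assoc)
    then show ?thesis using no_mixed lr by blast
  next
    case rl
    then have "\<pi> ^ m dvd 1 - \<pi> * (d' * e)" using dvd by (simp add: det2_def algebra_simps)
    then have "\<pi> ^ m dvd \<pi> * (d' * e) - 1" by (metis dvd_minus_iff minus_diff_eq)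
    then show ?thesis using no_mixed rl by blast
  next
    case rr
    then have "\<pi> * \<pi> ^ (m - 1) dvd \<pi> * (e' - e)"
      using dvd by (cases m) (simp_all add: det2_def right_diff_distrib)
    then have "e' = e" using rr residue_reps_unique pi_nonzero by simp
    then show ?thesis using rr by simp
  qed
qed

lemma smult2_pi_power_mem_P1_lattice_iff:
  "smult2 (\<pi> ^ r0) x \<in> P1_lattice \<pi> r0 r1 w \<longleftrightarrow> \<pi> ^ r1 dvd det2 (P1_point w) x"
proof -
  have "inj (smult2 (\<pi> ^ r0) :: 'a \<times> 'a \<Rightarrow> _)"
    using pi_nonzero by (auto simp: inj_def smult2_def prod_eq_iff)
  then show ?thesis unfolding P1_lattice_def by (auto simp: inj_image_mem_iff)
qed

lemma P1_lattice_le_r0: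
  assumes "P1_lattice \<pi> r0 r1 w = P1_lattice \<pi> r0' r1' w'"
  shows "r0 \<le> r0'"
proof -
  have "smult2 (\<pi> ^ r0') (P1_point w') \<in> P1_lattice \<pi> r0 r1 w"
    using assms smult2_pi_power_mem_P1_lattice_iff[of r0' "P1_point w'" r1' w']
    by (simp add: det2_def mult.commute)
  then obtain x where "smult2 (\<pi> ^ r0') (P1_point w') = smult2 (\<pi> ^ r0) x"
    unfolding P1_lattice_def by blast
  then have "\<pi> ^ r0 dvd \<pi> ^ r0' * fst (P1_point w')" "\<pi> ^ r0 dvd \<pi> ^ r0' * snd (P1_point w')"
    by (metis dvd_triv_left fst_conv snd_conv smult2_def)+
  then have "\<pi> ^ r0 dvd \<pi> ^ r0'" by (cases w') auto
  then show ?thesis by (simp add: pi_power_dvd_pi_power_iff)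
qed

lemma P1_lattice_in_finite_index_submodules2: "P1_lattice \<pi> r0 r1 w \<in> finite_index_submodules2"
  by (simp add: finite_index_submodules2_def finite_index2_def P1_lattice_eq_image index2_lat2
      submodule2_image[OF lin_aut2_P1_chart submodule2_lat2] finite_quot2_image_iff[OF lin_aut2_P1_chart])

lemma index2_P1_lattice: "index2 (P1_lattice \<pi> r0 r1 w) = q ^ (2 * r0 + r1)"
proof -
  have "index2 (P1_lattice \<pi> r0 r1 w) = q ^ (r0 + r1 + r0)"
    by (simp add: P1_lattice_eq_image index2_image[OF lin_aut2_P1_chart] index2_lat2)
  also have "r0 + r1 + r0 = 2 * r0 + r1" by simp
  finally show ?thesis .
qed

lemma zeta_supermodules_P1_lattice:
  "zeta_supermodules (P1_lattice \<pi> r0 r1 w) s = zeta_lambda \<pi> (r0 + r1) r0 s"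
  by (simp add: P1_lattice_eq_image zeta_supermodules_image[OF lin_aut2_P1_chart]
      zeta_lambda_eq_zeta_supermodules index2_lat2)

lemma P1_lattice_inj:
  assumes w: "w \<in> P1_reps r1" and w': "w' \<in> P1_reps r1'"
    and eq: "P1_lattice \<pi> r0 r1 w = P1_lattice \<pi> r0' r1' w'"
  shows "r0 = r0' \<and> r1 = r1' \<and> w = w'"
proof -
  have r0: "r0 = r0'" using P1_lattice_le_r0[OF eq] P1_lattice_le_r0[OF eq[symmetric]] by simp
  have "q ^ (2 * r0 + r1) = q ^ (2 * r0' + r1')" using eq by (metis index2_P1_lattice)
  then have r1: "r1 = r1'" using r0 two_le_q by (simp add: power_inject_exp)
  have "smult2 (\<pi> ^ r0) (P1_point w) \<in> P1_lattice \<pi> r0 r1 w'"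
    using eq r0 r1 smult2_pi_power_mem_P1_lattice_iff[of r0 "P1_point w" r1 w]
    by (simp add: det2_def mult.commute)
  then have "w = w'"
    using P1_reps_det2_dvd_unique w w' r1 by (simp add: smult2_pi_power_mem_P1_lattice_iff)
  with r0 r1 show ?thesis by simp
qed

lemma bij_betw_P1_lattice:
  "bij_betw (\<lambda>(r0, r1, w). P1_lattice \<pi> r0 r1 w)
     (SIGMA r0:UNIV. SIGMA r1:UNIV. P1_reps r1) finite_index_submodules2"
  (is "bij_betw ?f ?A _")
proof (rule bij_betwI')
  fix X Y assume "X \<in> ?A" "Y \<in> ?A"
  then show "(?f X = ?f Y) = (X = Y)" using P1_lattice_inj by auto
next
  fix X show "?f X \<in> finite_index_submodules2"
    using P1_lattice_in_finite_index_submodules2 by (simp add: case_prod_beta)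
next
  fix L :: "('a \<times> 'a) set" assume "L \<in> finite_index_submodules2"
  then obtain r0 r1 w where "w \<in> P1_reps r1" "L = P1_lattice \<pi> r0 r1 w"
    by (rule finite_index_submodule2_eq_P1_lattice)
  then show "\<exists>X\<in>?A. L = ?f X" by force
qed

lemma infsum_finite_index_submodules2:
  fixes F :: "('a \<times> 'a) set \<Rightarrow> ennreal"
  shows "infsum F finite_index_submodules2
       = infsum (\<lambda>r0. infsum (\<lambda>r1. \<Sum>w\<in>P1_reps r1. F (P1_lattice \<pi> r0 r1 w)) UNIV) UNIV"
proof -
  have "infsum F finite_index_submodules2
      = infsum (\<lambda>X. F ((\<lambda>(r0, r1, w). P1_lattice \<pi> r0 r1 w) X))
          (SIGMA r0:UNIV. SIGMA r1:UNIV. P1_reps r1)"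
    by (rule infsum_reindex_bij_betw[OF bij_betw_P1_lattice, symmetric])
  also have "\<dots> = infsum (\<lambda>r0. infsum (\<lambda>r1. infsum (\<lambda>w. F (P1_lattice \<pi> r0 r1 w)) (P1_reps r1)) UNIV) UNIV"
    unfolding infsum_Sigma_ennreal case_prod_conv ..
  finally show ?thesis by (simp add: finite_P1_reps)
qed

lemma infsum_card_P1_reps_weights:
  fixes t :: real and z :: "nat \<Rightarrow> nat \<Rightarrow> real"
  assumes t: "0 \<le> t" and z: "\<And>l1 l2. 0 \<le> z l1 l2"
  shows "infsum (\<lambda>r1. of_nat (card (P1_reps r1)) * ennreal (t ^ (2 * r0 + r1) * z (r0 + r1) r0 ^ k)) UNIV
       = ennreal (t ^ (2 * r0)) * (ennreal (z r0 r0) ^ k + ennreal (1 + 1 / real q) *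
           infsum (\<lambda>r1. ennreal ((real q * t) ^ r1) * ennreal (z (r0 + r1) r0) ^ k) {1..})"
proof -
  let ?g = "\<lambda>r1. of_nat (card (P1_reps r1)) * ennreal (t ^ (2 * r0 + r1) * z (r0 + r1) r0 ^ k)"
  have q: "real q > 0" using two_le_q by simp
  have "infsum ?g UNIV = infsum ?g (insert 0 {1..})"
    by (rule arg_cong[where f = "infsum ?g"]) auto
  also have "\<dots> = ?g 0 + infsum ?g {1..}"
    by (rule infsum_insert) (auto intro: nonneg_summable_on_complete)
  also have "?g 0 = ennreal (t ^ (2 * r0)) * ennreal (z r0 r0) ^ k"
    using t z by (simp add: card_P1_reps ennreal_mult ennreal_power)
  also have "infsum ?g {1..} = infsum (\<lambda>r1. ennreal (t ^ (2 * r0)) * (ennreal (1 + 1 / real q) *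
      (ennreal ((real q * t) ^ r1) * ennreal (z (r0 + r1) r0) ^ k))) {1..}"
  proof (rule infsum_cong)
    fix r1 :: nat assume "r1 \<in> {1..}"
    then have real_eq: "real (card (P1_reps r1)) * (t ^ (2 * r0 + r1) * z (r0 + r1) r0 ^ k)
        = t ^ (2 * r0) * ((1 + 1 / real q) * ((real q * t) ^ r1 * z (r0 + r1) r0 ^ k))"
      using q by (cases r1) (simp_all add: card_P1_reps field_simps power_add power_mult_distrib)
    have "?g r1 = ennreal (real (card (P1_reps r1))) * ennreal (t ^ (2 * r0 + r1) * z (r0 + r1) r0 ^ k)"
      by (simp only: ennreal_of_nat_eq_real_of_nat)
    also have "\<dots> = ennreal (real (card (P1_reps r1)) * (t ^ (2 * r0 + r1) * z (r0 + r1) r0 ^ k))"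
      using t z by (simp add: ennreal_mult)
    also have "\<dots> = ennreal (t ^ (2 * r0)) * (ennreal (1 + 1 / real q) *
        (ennreal ((real q * t) ^ r1) * ennreal (z (r0 + r1) r0) ^ k))"
      unfolding real_eq using t z by (simp add: ennreal_mult ennreal_power)
    finally show "?g r1 = ennreal (t ^ (2 * r0)) * (ennreal (1 + 1 / real q) *
        (ennreal ((real q * t) ^ r1) * ennreal (z (r0 + r1) r0) ^ k))" .
  qed
  finally show ?thesis
    by (simp add: infsum_cmult_right_ennreal distrib_left)
qed

end

theorem proposition3p6:
  fixes \<pi> :: "'a::idom" and q :: nat and a :: nat and s :: real
  assumes "compact_dvr \<pi> q" and "a \<ge> 1"
  defines "t \<equiv> real q powr (- s)"
  shows "zeta_V2a TYPE('a) a s =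
    infsum (\<lambda>r0. ennreal (t ^ (2 * r0)) *
       (ennreal (zeta_lambda \<pi> r0 r0 s) ^ (a - 1) +
        ennreal (1 + 1 / real q) *
          infsum (\<lambda>r1. ennreal ((real q * t) ^ r1) *
                      ennreal (zeta_lambda \<pi> (r0 + r1) r0 s) ^ (a - 1)) {1..}))
      UNIV"
proof -
  interpret compact_dvr_ring \<pi> q by (rule compact_dvr_ring.intro) (fact assms(1))
  have "zeta_V2a TYPE('a) a s
      = infsum (\<lambda>L. ennreal (real (index2 L) powr (- s) * zeta_supermodules L s ^ (a - 1)))
          (finite_index_submodules2 :: ('a \<times> 'a) set set)"
    by (rule zeta_V2a_eq_infsum_finite_index_submodules2[OF assms(2)])
  also have "\<dots> = infsum (\<lambda>r0. infsum (\<lambda>r1. of_nat (card (P1_reps r1))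
      * ennreal (t ^ (2 * r0 + r1) * zeta_lambda \<pi> (r0 + r1) r0 s ^ (a - 1))) UNIV) UNIV"
    by (simp add: infsum_finite_index_submodules2 index2_P1_lattice zeta_supermodules_P1_lattice
        power_powr t_def)
  finally show ?thesis
    by (rule trans)
      (intro infsum_cong infsum_card_P1_reps_weights[where z = "\<lambda>l1 l2. zeta_lambda \<pi> l1 l2 s"];
        simp add: t_def zeta_lambda_nonneg)
qed

end
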